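(* Let $\Bbbk$ be a field of characteristic $0$, let $n\ge 2$, and let $(A,\mu,\alpha)$ be an $n$-ary totally Hom-associative algebra over $\Bbbk$ all of whose $n-1$ twisting maps are equal to a single linear map $\alpha\colon A\to A$. Let $[\cdot,\ldots,\cdot]\colon A^{\otimes n}\to A$ be the $n$-commutator bracket of $\mu$. Then $N(A)=(A,[\cdot,\ldots,\cdot],\alpha)$ (all $n-1$ twisting maps equal to $\alpha$) is an $n$-ary Hom-Nambu algebra. Moreover, if $(A,\mu,\alpha)$ is multiplicative, then so is $N(A)$.
   Context: An $n$-ary Hom-algebra $(V,\mu,(\alpha_1,\ldots,\alpha_{n-1}))$ is a $\Bbbk$-vector space $V$ with an $n$-linear map $\mu\colon V^{\otimes n}\to V$ (written $\mu(a_1,\ldots,a_n)=(a_1\cdots a_n)$) and linear maps $\alpha_1,\ldots,\alpha_{n-1}\colon V\to V$ (twisting maps). It is multiplicative if all twisting maps equal one map $\alpha$ and $\alpha\circ\mu=\mu\circ\alpha^{\otimes n}$. For $i\in\{1,\ldots,n-1\}$ the $i$th Hom-associator is the $(2n-1)$-linear map $as^i(a_1,\ldots,a_{2n-1})=(\alpha_1(a_1),\ldots,\alpha_{i-1}(a_{i-1}),(a_i\cdots a_{i+n-1}),\alpha_i(a_{i+n}),\ldots,\alpha_{n-1}(a_{2n-1}))-(\alpha_1(a_1),\ldots,\alpha_i(a_i),(a_{i+1}\cdots a_{i+n}),\alpha_{i+1}(a_{i+n+1}),\ldots,\alpha_{n-1}(a_{2n-1}))$. The Hom-algebra is $n$-ary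 totally Hom-associative if $as^i=0$ for all $i\in\{1,\ldots,n-1\}$. $n$-commutator words: in non-commuting variables $X_1,X_2,\ldots$, set $W_2=\{X_1X_2,-X_2X_1\}$ and for $n>2$, $W_n=\{zX_n,\,-X_nz : z\in W_{n-1}\}$ (so $|W_n|=2^{n-1}$). A word $w=\pm X_{i_1}\cdots X_{i_n}\in W_n$ acts by $w(a_1,\ldots,a_n)=\pm a_{i_1}\otimes\cdots\otimes a_{i_n}$. The $n$-commutator bracket is $[a_1,\ldots,a_n]=\sum_{w\in W_n}\mu(w(a_1,\ldots,a_n))$ (e.g. for $n=3$: $(a_1a_2a_3)-(a_2a_1a_3)-(a_3a_1a_2)+(a_3a_2a_1)$). For an $n$-ary Hom-algebra $(V,[\cdot,\ldots,\cdot],(\alpha_1,\ldots,\alpha_{n-1}))$, the $n$-ary Hom-Jacobian is $J(x_1,\ldots,x_{n-1};y_1,\ldots,y_n)=[\alpha_1(x_1),\ldots,\alpha_{n-1}(x_{n-1}),[y_1,\ldots,y_n]]-\sum_{i=1}^n[\alpha_1(y_1),\ldots,\alpha_{i-1}(y_{i-1}),[x_1,\ldots,x_{n-1},y_i],\alpha_i(y_{i+1}),\ldots,\alpha_{n-1}(y_n)]$, and $V$ is an $n$-ary Hom-Nambu algebra if $J=0$ identically. *)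

theory Defs
  imports Complex_Main
begin

text \<open>Vectors of arguments are lists (0-indexed). Twisting maps are indexed
  1..n-1 as in the paper: al i for i in {1..n-1}.\<close>

definition n_linear :: "('k::field \<Rightarrow> 'v::ab_group_add \<Rightarrow> 'v) \<Rightarrow> nat \<Rightarrow> ('v list \<Rightarrow> 'v) \<Rightarrow> bool" where
  "n_linear scale n mu \<longleftrightarrow>
     (\<forall>xs. length xs = n \<longrightarrow> (\<forall>i<n. Vector_Spaces.linear scale scale (\<lambda>v. mu (xs[i := v]))))"

definition hom_algebra :: "('k::field \<Rightarrow> 'v::ab_group_add \<Rightarrow> 'v) \<Rightarrow> nat \<Rightarrow> ('v list \<Rightarrow> 'v) \<Rightarrow> (nat \<Rightarrow> 'v \<Rightarrow> 'v) \<Rightarrow> bool" where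
  "hom_algebra scale n mu al \<longleftrightarrow>
     n_linear scale n mu \<and> (\<forall>i\<in>{1..n-1}. Vector_Spaces.linear scale scale (al i))"

definition multiplicative :: "('k::field \<Rightarrow> 'v::ab_group_add \<Rightarrow> 'v) \<Rightarrow> nat \<Rightarrow> ('v list \<Rightarrow> 'v) \<Rightarrow> ('v \<Rightarrow> 'v) \<Rightarrow> bool" where
  "multiplicative scale n mu alpha \<longleftrightarrow>
     hom_algebra scale n mu (\<lambda>_. alpha) \<and>
     (\<forall>xs. length xs = n \<longrightarrow> alpha (mu xs) = mu (map alpha xs))"

text \<open>hom_comp n mu al j xs, for xs of length 2n-1 and 0 <= j <= n-1, is
  (al 1 (a_1), ..., al j (a_j), (a_{j+1} ... a_{j+n}), al (j+1) (a_{j+n+1}), ..., al (n-1) (a_{2n-1})).\<close>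
definition hom_comp :: "nat \<Rightarrow> ('v list \<Rightarrow> 'v) \<Rightarrow> (nat \<Rightarrow> 'v \<Rightarrow> 'v) \<Rightarrow> nat \<Rightarrow> 'v list \<Rightarrow> 'v" where
  "hom_comp n mu al j xs =
     mu (map (\<lambda>k. al (k + 1) (xs ! k)) [0..<j]
         @ [mu (take n (drop j xs))]
         @ map (\<lambda>k. al (j + 1 + k) (xs ! (j + n + k))) [0..<n - 1 - j])"

definition hom_associator :: "nat \<Rightarrow> ('v::ab_group_add list \<Rightarrow> 'v) \<Rightarrow> (nat \<Rightarrow> 'v \<Rightarrow> 'v) \<Rightarrow> nat \<Rightarrow> 'v list \<Rightarrow> 'v" where
  "hom_associator n mu al i xs = hom_comp n mu al (i - 1) xs - hom_comp n mu al i xs"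

definition totally_hom_assoc :: "('k::field \<Rightarrow> 'v::ab_group_add \<Rightarrow> 'v) \<Rightarrow> nat \<Rightarrow> ('v list \<Rightarrow> 'v) \<Rightarrow> (nat \<Rightarrow> 'v \<Rightarrow> 'v) \<Rightarrow> bool" where
  "totally_hom_assoc scale n mu al \<longleftrightarrow>
     hom_algebra scale n mu al \<and>
     (\<forall>i\<in>{1..n-1}. \<forall>xs. length xs = 2 * n - 1 \<longrightarrow> hom_associator n mu al i xs = 0)"

text \<open>n-commutator words: a word is (sign, list of 0-based variable indices);
  sign True means +. words 1 = {X_1}, W_{m+1} = {z X_{m+1}, - X_{m+1} z : z in W_m},
  so words 2 = {X_1 X_2, - X_2 X_1} = W_2.\<close>
fun comm_words :: "nat \<Rightarrow> (bool \<times> nat list) list" where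
  "comm_words 0 = []"
| "comm_words (Suc 0) = [(True, [0])]"
| "comm_words (Suc (Suc m)) =
     concat (map (\<lambda>(s, w). [(s, w @ [Suc m]), (\<not> s, Suc m # w)]) (comm_words (Suc m)))"

definition n_commutator :: "nat \<Rightarrow> ('v::ab_group_add list \<Rightarrow> 'v) \<Rightarrow> 'v list \<Rightarrow> 'v" where
  "n_commutator n mu xs =
     sum_list (map (\<lambda>(s, w). if s then mu (map ((!) xs) w) else - mu (map ((!) xs) w))
                   (comm_words n))"

definition hom_jacobian :: "nat \<Rightarrow> ('v::ab_group_add list \<Rightarrow> 'v) \<Rightarrow> (nat \<Rightarrow> 'v \<Rightarrow> 'v) \<Rightarrow> 'v list \<Rightarrow> 'v list \<Rightarrow> 'v" where
  "hom_jacobian n br al xs ys =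
     br (map (\<lambda>k. al (k + 1) (xs ! k)) [0..<n - 1] @ [br ys])
     - (\<Sum>i=1..n. br (map (\<lambda>k. al (k + 1) (ys ! k)) [0..<i - 1]
                       @ [br (xs @ [ys ! (i - 1)])]
                       @ map (\<lambda>k. al (i + k) (ys ! (i + k))) [0..<n - i]))"

definition hom_nambu :: "('k::field \<Rightarrow> 'v::ab_group_add \<Rightarrow> 'v) \<Rightarrow> nat \<Rightarrow> ('v list \<Rightarrow> 'v) \<Rightarrow> (nat \<Rightarrow> 'v \<Rightarrow> 'v) \<Rightarrow> bool" where
  "hom_nambu scale n br al \<longleftrightarrow>
     hom_algebra scale n br al \<and>
     (\<forall>xs ys. length xs = n - 1 \<longrightarrow> length ys = n \<longrightarrow> hom_jacobian n br al xs ys = 0)"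

end

theory Submission
  imports Defs "HOL-Library.Poly_Mapping"
begin

text \<open>In the free associative ring \<open>\<int>\<langle>X\<rangle>\<close> the \<open>n\<close>-commutator is the iterated commutator
  \<open>[[\<dots>[X\<^sub>1, X\<^sub>2], \<dots>], X\<^sub>n]\<close>, so the inner derivation \<open>g \<mapsto> D g - g D\<close> acts on it
  slot by slot; for \<open>D = [x\<^sub>1, \<dots>, x\<^sub>n\<^sub>-\<^sub>1]\<close> this is the Nambu identity.
  Total Hom-associativity means that all twisted composites
  \<open>\<mu>(\<alpha> a, \<dots>, \<mu>(\<dots>), \<dots>, \<alpha> a)\<close> of \<open>2n - 1\<close> elements agree, so evaluating words of
  length \<open>2n - 1\<close> by this common value is a \<open>\<int>\<close>-linear map which sends both sides of the
  free identity to the two sides of the Hom-Jacobian. Linearity and multiplicativity of the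
  bracket are inherited word by word from \<open>\<mu>\<close>.\<close>

text \<open>Concatenation makes lists the free monoid, so \<open>'a list \<Rightarrow>\<^sub>0 int\<close> becomes the free
  associative ring on \<open>'a\<close>, with \<open>frag_of\<close> of a word as its monomial.\<close>
instantiation list :: (type) monoid_add
begin
definition plus_list_def: "xs + ys = xs @ ys"
definition zero_list_def: "0 = []"
instance by standard (simp_all add: plus_list_def zero_list_def)
end

definition letter :: "'a \<Rightarrow> 'a list \<Rightarrow>\<^sub>0 int" where
  "letter a = frag_of [a]"

lemma prod_list_letter: "prod_list (map letter xs) = frag_of xs"
proof (induction xs)
  case Nil
  show ?case using single_one[where 'a="'a list" and 'b=int] by (simp add: zero_list_def)
next
  case (Cons a xs)
  then show ?case by (simp add: letter_def mult_single plus_list_def)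
qed

lemma map_nth_list_update_notin: "j \<notin> set w \<Longrightarrow> map ((!) (xs[j := c])) w = map ((!) xs) w"
  by (induction w) auto

lemma length_permutation_word: "distinct w \<Longrightarrow> set w = {..<n} \<Longrightarrow> length w = n"
  using distinct_card[of w] by simp

lemma permutation_word_split:
  assumes "distinct w" "set w = {..<n}" "j < n"
  obtains w1 w2 where "w = w1 @ j # w2" "set w1 \<subseteq> {..<n}" "set w2 \<subseteq> {..<n}"
    "length w1 + length w2 = n - 1"
proof -
  have "j \<in> set w"
    using assms(2,3) by simp
  then obtain w1 w2 where w: "w = w1 @ j # w2"
    by (meson split_list)
  have "set w1 \<subseteq> set w" "set w2 \<subseteq> set w" "length w = n"
    using length_permutation_word[OF assms(1,2)] by (auto simp: w)
  then show ?thesis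
    using assms(2) by (intro that[OF w]) (simp_all add: w)
qed

lemma map_nth_list_update_split:
  assumes "distinct (w1 @ j # w2)" "j < length xs"
  shows "map ((!) (xs[j := v])) (w1 @ j # w2) = map ((!) xs) w1 @ v # map ((!) xs) w2"
  using assms by (simp add: map_nth_list_update_notin)

lemma map_nth_upt_update:
  "j < length ys \<Longrightarrow>
    map (\<lambda>k. f (ys ! k)) [0..<j] @ [c] @ map (\<lambda>k. f (ys ! (Suc j + k))) [0..<length ys - Suc j]
     = (map f ys)[j := c]"
  by (rule nth_equalityI) (auto simp: nth_append nth_list_update)

lemma comm_words_permutation: "(s, w) \<in> set (comm_words n) \<Longrightarrow> distinct w \<and> set w = {..<n}"
proof (induction n arbitrary: s w rule: comm_words.induct)
  case (3 m)
  from "3.prems" obtain s' w' where w': "(s', w') \<in> set (comm_words (Suc m))"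
    and "(s, w) = (s', w' @ [Suc m]) \<or> (s, w) = (\<not> s', Suc m # w')"
    by (simp only: comm_words.simps set_concat set_map) fastforce
  then consider "w = w' @ [Suc m]" | "w = Suc m # w'"
    by auto
  moreover have "distinct w'" "set w' = {..<Suc m}"
    using "3.IH"[OF w'] by auto
  ultimately show ?case
    by cases (simp_all add: lessThan_Suc[of "Suc m"])
qed auto

lemma (in additive) sum_list: "f (sum_list xs) = sum_list (map f xs)"
  by (induction xs) (simp_all add: zero add)

lemma additive_n_commutator:
  assumes "additive h"
    and "\<And>w. distinct w \<Longrightarrow> set w = {..<n} \<Longrightarrow> h (f (map ((!) xs) w)) = g (map ((!) ys) w)"
  shows "h (n_commutator n f xs) = n_commutator n g ys"
proof -
  interpret additive h by fact
  show ?thesis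
    unfolding n_commutator_def sum_list map_map
  proof (intro arg_cong[where f=sum_list] map_cong refl)
    fix sw assume "sw \<in> set (comm_words n)"
    moreover obtain s w where "sw = (s, w)" by fastforce
    ultimately show "(h \<circ> (\<lambda>(s, w). if s then f (map ((!) xs) w) else - f (map ((!) xs) w))) sw
      = (\<lambda>(s, w). if s then g (map ((!) ys) w) else - g (map ((!) ys) w)) sw"
      using assms(2) comm_words_permutation by (simp add: minus)
  qed
qed

lemma n_commutator_one: "n_commutator (Suc 0) f [x] = f [x]"
  by (simp add: n_commutator_def)

lemma n_commutator_snoc:
  fixes gs :: "'r::ring_1 list"
  assumes "length gs = Suc m"
  shows "n_commutator (Suc (Suc m)) prod_list (gs @ [h])
         = n_commutator (Suc m) prod_list gs * h - h * n_commutator (Suc m) prod_list gs"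
proof -
  let ?t = "\<lambda>gs (s, w). if s then prod_list (map ((!) gs) w) else - prod_list (map ((!) gs) w)"
  have "sum_list (map (?t (gs @ [h])) (concat (map (\<lambda>(s, w). [(s, w @ [Suc m]), (\<not> s, Suc m # w)]) L)))
      = sum_list (map (?t gs) L) * h - h * sum_list (map (?t gs) L)"
    if "\<forall>(s, w)\<in>set L. set w \<subseteq> {..<Suc m}" for L
    using that
  proof (induction L)
    case (Cons sw L)
    obtain s w where sw: "sw = (s, w)" by fastforce
    with Cons.prems have prefix: "map ((!) (gs @ [h])) w = map ((!) gs) w"
      using assms by (auto simp: nth_append)
    have last: "(gs @ [h]) ! Suc m = h"
      using assms nth_append_length[of gs h] by simp
    from Cons show ?case
      by (cases s) (simp_all add: sw prefix last algebra_simps)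
  qed simp
  moreover have "\<forall>(s, w)\<in>set (comm_words (Suc m)). set w \<subseteq> {..<Suc m}"
    using comm_words_permutation by fastforce
  ultimately show ?thesis
    by (simp add: n_commutator_def)
qed

lemma inner_derivation_n_commutator:
  fixes hs :: "'r::ring_1 list"
  assumes "length hs = Suc m"
  shows "D * n_commutator (Suc m) prod_list hs - n_commutator (Suc m) prod_list hs * D
    = (\<Sum>i<Suc m. n_commutator (Suc m) prod_list (hs[i := D * hs ! i - hs ! i * D]))"
  using assms
proof (induction m arbitrary: hs)
  case 0
  then obtain h where "hs = [h]" by (cases hs) auto
  then show ?case by (simp add: n_commutator_one)
next
  case (Suc m)
  then obtain gs h where hs: "hs = gs @ [h]" and gs: "length gs = Suc m"
    by (metis length_Suc_conv_rev)
  define A where "A = n_commutator (Suc m) prod_list gs"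
  define \<delta> where "\<delta> x = D * x - x * D" for x
  have "(\<Sum>i<Suc (Suc m). n_commutator (Suc (Suc m)) prod_list (hs[i := \<delta> (hs ! i)]))
      = (\<Sum>i<Suc m. n_commutator (Suc m) prod_list (gs[i := \<delta> (gs ! i)]) * h
              - h * n_commutator (Suc m) prod_list (gs[i := \<delta> (gs ! i)]))
        + (A * \<delta> h - \<delta> h * A)"
    using gs by (simp add: hs list_update_append nth_append n_commutator_snoc A_def)
  also have "\<dots> = \<delta> A * h - h * \<delta> A + (A * \<delta> h - \<delta> h * A)"
    unfolding sum_subtractf sum_distrib_left[symmetric] sum_distrib_right[symmetric]
      Suc.IH[OF gs, symmetric] A_def \<delta>_def ..
  also have "\<dots> = \<delta> (A * h - h * A)"
    by (simp add: \<delta>_def algebra_simps)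
  finally show ?case
    using gs by (simp add: hs n_commutator_snoc A_def \<delta>_def)
qed

definition frag_eval :: "('k::field \<Rightarrow> 'v::ab_group_add \<Rightarrow> 'v) \<Rightarrow> ('a \<Rightarrow> 'v) \<Rightarrow> ('a \<Rightarrow>\<^sub>0 int) \<Rightarrow> 'v" where
  "frag_eval scale \<phi> g = (\<Sum>w\<in>Poly_Mapping.keys g. scale (of_int (Poly_Mapping.lookup g w)) (\<phi> w))"

context vector_space
begin

lemma frag_eval_superset:
  "finite K \<Longrightarrow> Poly_Mapping.keys g \<subseteq> K \<Longrightarrow>
    frag_eval scale \<phi> g = (\<Sum>w\<in>K. scale (of_int (Poly_Mapping.lookup g w)) (\<phi> w))"
  unfolding frag_eval_def by (rule sum.mono_neutral_left) (auto simp: in_keys_iff)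

lemma additive_frag_eval: "additive (frag_eval scale \<phi>)"
proof
  fix f g :: "'c \<Rightarrow>\<^sub>0 int"
  let ?K = "Poly_Mapping.keys f \<union> Poly_Mapping.keys g"
  show "frag_eval scale \<phi> (f + g) = frag_eval scale \<phi> f + frag_eval scale \<phi> g"
    by (simp add: frag_eval_superset[OF _ keys_add] frag_eval_superset[of ?K f]
        frag_eval_superset[of ?K g] lookup_add scale_left_distrib sum.distrib)
qed

lemma frag_eval_frag_of [simp]: "frag_eval scale \<phi> (frag_of w) = \<phi> w"
  by (simp add: frag_eval_def)

lemma frag_eval_shift:
  "frag_eval scale \<phi> (frag_of u * g * frag_of v) = frag_eval scale (\<lambda>w. \<phi> (u @ w @ v)) g"
proof -
  have "Poly_Mapping.keys g \<subseteq> UNIV" by simp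
  then show ?thesis
  proof (induction rule: frag_induction)
    case (one x)
    then show ?case by (simp add: mult_single plus_list_def)
  next
    case (diff a b)
    then show ?case
      by (simp add: left_diff_distrib right_diff_distrib additive.diff[OF additive_frag_eval])
  qed (simp add: additive.zero[OF additive_frag_eval])
qed

lemma n_commutator_frag_eval:
  assumes "length ys = m"
  shows "frag_eval scale \<phi> (n_commutator m prod_list (map letter ys)) = n_commutator m \<phi> ys"
proof (rule additive_n_commutator[OF additive_frag_eval])
  fix w assume "set w = {..<m}"
  then have "map ((!) (map letter ys)) w = map letter (map ((!) ys) w)"
    using assms by auto
  then show "frag_eval scale \<phi> (prod_list (map ((!) (map letter ys)) w)) = \<phi> (map ((!) ys) w)"
    by (simp only: prod_list_letter frag_eval_frag_of)
qed

end

locale totally_hom_assoc_algebra = vector_space scale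
  for scale :: "'k::field \<Rightarrow> 'v::ab_group_add \<Rightarrow> 'v" +
  fixes n :: nat and mu :: "'v list \<Rightarrow> 'v" and alpha :: "'v \<Rightarrow> 'v"
  assumes arity: "n \<ge> 2"
    and totally_hom_assoc: "totally_hom_assoc scale n mu (\<lambda>_. alpha)"
begin

sublocale vector_space_pair scale scale
  by unfold_locales

lemma linear_mu:
  assumes "length p + length s = n - 1"
  shows "Vector_Spaces.linear scale scale (\<lambda>v. mu (p @ v # s))"
proof -
  have "n_linear scale n mu"
    using totally_hom_assoc by (simp add: totally_hom_assoc_def hom_algebra_def)
  moreover have "length (p @ 0 # s) = n" "length p < n"
    using assms arity by auto
  ultimately have "Vector_Spaces.linear scale scale (\<lambda>v. mu ((p @ 0 # s)[length p := v]))"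
    unfolding n_linear_def by blast
  then show ?thesis
    by (simp add: list_update_append)
qed

lemma linear_alpha: "Vector_Spaces.linear scale scale alpha"
proof -
  have "1 \<in> {1..n - 1}"
    using arity by simp
  then show ?thesis
    using totally_hom_assoc unfolding totally_hom_assoc_def hom_algebra_def by blast
qed

abbreviation nested_mu :: "'v list \<Rightarrow> 'v" where
  "nested_mu w \<equiv> hom_comp n mu (\<lambda>_. alpha) 0 w"

lemma hom_comp_eq_nested_mu:
  "length w = 2 * n - 1 \<Longrightarrow> j \<le> n - 1 \<Longrightarrow> hom_comp n mu (\<lambda>_. alpha) j w = nested_mu w"
proof (induction j)
  case (Suc j)
  then have "hom_associator n mu (\<lambda>_. alpha) (Suc j) w = 0"
    using totally_hom_assoc by (auto simp: totally_hom_assoc_def)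
  with Suc show ?case
    by (simp add: hom_associator_def)
qed simp

lemma mu_eq_nested_mu:
  assumes "length p + length s = n - 1" "length u = n"
  shows "mu (map alpha p @ mu u # map alpha s) = nested_mu (p @ u @ s)"
proof -
  have "map (\<lambda>k. alpha ((p @ u @ s) ! k)) [0..<length p] = map alpha p"
    by (rule nth_equalityI) (auto simp: nth_append)
  moreover have "map (\<lambda>k. alpha ((p @ u @ s) ! (length p + n + k))) [0..<n - 1 - length p] = map alpha s"
    using assms by (intro nth_equalityI) (auto simp: nth_append)
  ultimately have "hom_comp n mu (\<lambda>_. alpha) (length p) (p @ u @ s) = mu (map alpha p @ mu u # map alpha s)"
    using assms unfolding hom_comp_def by simp
  moreover have "hom_comp n mu (\<lambda>_. alpha) (length p) (p @ u @ s) = nested_mu (p @ u @ s)"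
    using assms arity by (intro hom_comp_eq_nested_mu) auto
  ultimately show ?thesis
    by simp
qed

lemma mu_word_frag_eval:
  assumes w: "distinct w" "set w = {..<n}" and as: "length as = n" "j < n" and zs: "length zs = n"
  shows "frag_eval scale nested_mu
           (prod_list (map ((!) ((map letter as)[j := n_commutator n prod_list (map letter zs)])) w))
         = mu (map ((!) ((map alpha as)[j := n_commutator n mu zs])) w)"
proof -
  obtain w1 w2 where split: "w = w1 @ j # w2"
    and bounds: "set w1 \<subseteq> {..<n}" "set w2 \<subseteq> {..<n}" and len: "length w1 + length w2 = n - 1"
    using permutation_word_split[OF w as(2)] .
  have upd: "map ((!) (xs[j := v])) w = map ((!) xs) w1 @ v # map ((!) xs) w2"
    if "length xs = n" for xs :: "'x list" and v
    using map_nth_list_update_split[of w1 j w2 xs v] w(1) that as(2) split by simp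
  define p where "p = map ((!) as) w1"
  define s where "s = map ((!) as) w2"
  have ps: "length p + length s = n - 1"
    using len by (simp add: p_def s_def)
  have map_p: "map ((!) (map f as)) w1 = map f p" and map_s: "map ((!) (map f as)) w2 = map f s" for f
    using bounds as by (auto simp: p_def s_def)
  define L where "L v = mu (map alpha p @ v # map alpha s)" for v
  have "additive L"
    using linear_mu[of "map alpha p" "map alpha s"] ps
    unfolding additive_def Vector_Spaces.linear_iff L_def by simp
  let ?C = "n_commutator n prod_list (map letter zs)"
  have "map ((!) ((map letter as)[j := ?C])) w = map letter p @ ?C # map letter s"
    using upd[of "map letter as"] as by (simp only: map_p map_s length_map)
  then have "prod_list (map ((!) ((map letter as)[j := ?C])) w) = frag_of p * ?C * frag_of s"
    by (simp add: prod_list_letter mult.assoc)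
  then have "frag_eval scale nested_mu (prod_list (map ((!) ((map letter as)[j := ?C])) w))
      = frag_eval scale (\<lambda>u. nested_mu (p @ u @ s)) ?C"
    by (simp add: frag_eval_shift)
  also have "\<dots> = n_commutator n (\<lambda>u. nested_mu (p @ u @ s)) zs"
    using zs by (rule n_commutator_frag_eval)
  also have "\<dots> = L (n_commutator n mu zs)"
    by (rule additive_n_commutator[OF \<open>additive L\<close>, symmetric])
      (simp add: L_def mu_eq_nested_mu[OF ps] length_permutation_word)
  also have "\<dots> = mu (map ((!) ((map alpha as)[j := n_commutator n mu zs])) w)"
    using as by (simp add: L_def upd map_p map_s)
  finally show ?thesis .
qed

lemma n_commutator_frag_eval_nested:
  assumes "length as = n" "j < n" "length zs = n"
  shows "frag_eval scale nested_mu
           (n_commutator n prod_list ((map letter as)[j := n_commutator n prod_list (map letter zs)]))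
         = n_commutator n mu ((map alpha as)[j := n_commutator n mu zs])"
  by (rule additive_n_commutator[OF additive_frag_eval], rule mu_word_frag_eval) (use assms in simp_all)

lemma linear_n_commutator:
  assumes xs: "length xs = n" "i < n"
  shows "Vector_Spaces.linear scale scale (\<lambda>v. n_commutator n mu (xs[i := v]))"
proof -
  have word: "Vector_Spaces.linear scale scale (\<lambda>v. mu (map ((!) (xs[i := v])) w))"
    if w: "distinct w" "set w = {..<n}" for w
  proof -
    obtain w1 w2 where split: "w = w1 @ i # w2" and len: "length w1 + length w2 = n - 1"
      using permutation_word_split[OF w xs(2)] by blast
    have "map ((!) (xs[i := v])) w = map ((!) xs) w1 @ v # map ((!) xs) w2" for v
      using map_nth_list_update_split[of w1 i w2 xs v] w(1) xs split by simp
    then show ?thesis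
      using linear_mu[of "map ((!) xs) w1" "map ((!) xs) w2"] len by simp
  qed
  have "Vector_Spaces.linear scale scale (\<lambda>v. \<Sum>(s, w)\<leftarrow>L.
      if s then mu (map ((!) (xs[i := v])) w) else - mu (map ((!) (xs[i := v])) w))"
    if "set L \<subseteq> set (comm_words n)" for L
    using that
  proof (induction L)
    case Nil
    then show ?case by (simp add: linear_zero)
  next
    case (Cons sw L)
    obtain s w where sw: "sw = (s, w)" by fastforce
    with Cons.prems have "distinct w" "set w = {..<n}"
      using comm_words_permutation by auto
    with Cons show ?case
      by (cases s) (simp_all add: sw linear_compose_add linear_compose_sub word)
  qed
  then show ?thesis
    unfolding n_commutator_def by blast
qed

lemma alpha_n_commutator:
  assumes mult: "multiplicative scale n mu alpha" and xs: "length xs = n"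
  shows "alpha (n_commutator n mu xs) = n_commutator n mu (map alpha xs)"
proof (rule additive_n_commutator)
  show "additive alpha"
    using linear_alpha unfolding additive_def Vector_Spaces.linear_iff by simp
next
  fix w :: "nat list"
  assume w: "distinct w" "set w = {..<n}"
  have hom: "\<forall>us. length us = n \<longrightarrow> alpha (mu us) = mu (map alpha us)"
    using mult by (simp add: multiplicative_def)
  have "map ((!) (map alpha xs)) w = map alpha (map ((!) xs) w)"
    using w(2) xs by auto
  then show "alpha (mu (map ((!) xs) w)) = mu (map ((!) (map alpha xs)) w)"
    using hom length_permutation_word[OF w] by (simp del: map_map)
qed

lemma hom_jacobian_n_commutator:
  assumes xs: "length xs = n - 1" and ys: "length ys = n"
  shows "hom_jacobian n (n_commutator n mu) (\<lambda>_. alpha) xs ys = 0"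
proof -
  obtain m where nm: "n = Suc (Suc m)"
    using arity by (metis add_2_eq_Suc le_Suc_ex)
  define D where "D = n_commutator (Suc m) prod_list (map letter xs)"
  define B where "B = n_commutator n prod_list (map letter ys)"
  define \<delta> where "\<delta> g = D * g - g * D" for g
  have bracket_xs: "n_commutator n prod_list (map letter xs @ [g]) = \<delta> g" for g
    unfolding nm D_def \<delta>_def using xs nm by (intro n_commutator_snoc) simp
  have outer: "n_commutator n mu (map (\<lambda>k. alpha (xs ! k)) [0..<n - 1] @ [n_commutator n mu ys])
      = frag_eval scale nested_mu (\<delta> B)"
  proof -
    have "map (\<lambda>k. alpha (xs ! k)) [0..<n - 1] = map alpha xs"
      using xs by (intro nth_equalityI) simp_all
    then have "map (\<lambda>k. alpha (xs ! k)) [0..<n - 1] @ [n_commutator n mu ys]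
        = (map alpha (xs @ [0]))[n - 1 := n_commutator n mu ys]"
      using xs by (simp add: list_update_append)
    moreover have "(map letter (xs @ [0]))[n - 1 := B] = map letter xs @ [B]"
      using xs by (simp add: list_update_append)
    ultimately show ?thesis
      using n_commutator_frag_eval_nested[of "xs @ [0]" "n - 1" ys] xs ys arity
      by (simp add: B_def bracket_xs)
  qed
  have inner: "n_commutator n mu (map (\<lambda>k. alpha (ys ! k)) [0..<i - 1]
                 @ [n_commutator n mu (xs @ [ys ! (i - 1)])]
                 @ map (\<lambda>k. alpha (ys ! (i + k))) [0..<n - i])
      = frag_eval scale nested_mu
          (n_commutator n prod_list ((map letter ys)[i - 1 := \<delta> (map letter ys ! (i - 1))]))"
    if i: "i \<in> {1..n}" for i
  proof -
    have j: "i - 1 < length ys" "Suc (i - 1) = i"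
      using i ys by auto
    have "map (\<lambda>k. alpha (ys ! k)) [0..<i - 1] @ [n_commutator n mu (xs @ [ys ! (i - 1)])]
                 @ map (\<lambda>k. alpha (ys ! (i + k))) [0..<n - i]
        = (map alpha ys)[i - 1 := n_commutator n mu (xs @ [ys ! (i - 1)])]"
      using map_nth_upt_update[OF j(1)] j(2) ys by simp
    moreover have "n_commutator n prod_list (map letter (xs @ [ys ! (i - 1)]))
        = \<delta> (map letter ys ! (i - 1))"
      using bracket_xs j(1) by simp
    ultimately show ?thesis
      using n_commutator_frag_eval_nested[of ys "i - 1" "xs @ [ys ! (i - 1)]"] j ys xs arity by simp
  qed
  have "(\<Sum>i=1..n. frag_eval scale nested_mu
          (n_commutator n prod_list ((map letter ys)[i - 1 := \<delta> (map letter ys ! (i - 1))])))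
      = frag_eval scale nested_mu
          (\<Sum>i<n. n_commutator n prod_list ((map letter ys)[i := \<delta> (map letter ys ! i)]))"
    by (simp add: additive.sum[OF additive_frag_eval] sum.atLeast1_atMost_eq)
  also have "(\<Sum>i<n. n_commutator n prod_list ((map letter ys)[i := \<delta> (map letter ys ! i)])) = \<delta> B"
    unfolding B_def \<delta>_def nm using ys nm by (intro inner_derivation_n_commutator[symmetric]) simp
  finally have "(\<Sum>i=1..n. n_commutator n mu (map (\<lambda>k. alpha (ys ! k)) [0..<i - 1]
                 @ [n_commutator n mu (xs @ [ys ! (i - 1)])]
                 @ map (\<lambda>k. alpha (ys ! (i + k))) [0..<n - i]))
      = frag_eval scale nested_mu (\<delta> B)"
    by (simp only: sum.cong[OF refl inner])
  then show ?thesis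
    unfolding hom_jacobian_def outer by simp
qed

end

theorem theorem4p5:
  fixes scale :: "'k::field_char_0 \<Rightarrow> 'v::ab_group_add \<Rightarrow> 'v"
    and n :: nat and mu :: "'v list \<Rightarrow> 'v" and alpha :: "'v \<Rightarrow> 'v"
  assumes "vector_space scale"
    and "n \<ge> 2"
    and "totally_hom_assoc scale n mu (\<lambda>_. alpha)"
  shows "hom_nambu scale n (n_commutator n mu) (\<lambda>_. alpha)
         \<and> (multiplicative scale n mu alpha \<longrightarrow> multiplicative scale n (n_commutator n mu) alpha)"
proof -
  interpret totally_hom_assoc_algebra scale n mu alpha
    using assms unfolding totally_hom_assoc_algebra_def totally_hom_assoc_algebra_axioms_def by simp
  have "hom_algebra scale n (n_commutator n mu) (\<lambda>_. alpha)"
    using linear_n_commutator linear_alpha by (simp add: hom_algebra_def n_linear_def)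
  then show ?thesis
    using hom_jacobian_n_commutator alpha_n_commutator
    by (auto simp: hom_nambu_def multiplicative_def)
qed

end
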